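(* In the homogeneous, resource-abundant setting ($N_k=N>0$ for all $k\in[n]$, $F\ge nN$), let $\boldsymbol O^*$ have $O^*_{\mathcal N}=N/2$ and $O^*_i=0$ for $i<\mathcal N$. Let $\boldsymbol\varepsilon=(0,\dots,0,-\eta)\in\mathbb R^{\mathcal N}$ with $\eta>0$. Then $$T(\boldsymbol\varepsilon)\le-\boldsymbol O^{*t}M\boldsymbol\varepsilon,$$ where $T(\boldsymbol\varepsilon)=\boldsymbol l^t\boldsymbol\varepsilon+\frac12\boldsymbol\varepsilon^tM\boldsymbol\varepsilon$.
   Context: Fix an integer $n\ge2$ and write $[m]=\{1,\dots,m\}$. Let $\mathcal X$ be the collection of subsets of $[n]$ with at least two elements, $\mathcal N=2^n-n-1$, and let $I:\mathcal X\to[\mathcal N]$ be a bijection such that $A\subsetneq B$ implies $I(A)<I(B)$ (so $I([n])=\mathcal N$). Write $f(c)=|I^{-1}(c)|$, $S(c)=\{i\in[\mathcal N]:I^{-1}(c)\subseteq I^{-1}(i)\}$, $B(c)=\{i\in[\mathcal N]:I^{-1}(i)\subsetneq I^{-1}(c)\}$. With effective knowledges $N_k'=\min\{N_k,F\}$ (here all equal to $N$), the objective is $$T(\boldsymbol O)=\sum_{c=1}^{\mathcal N}\frac{\sum_{a\in S(c)}O_a}{\prod_{k\in I^{-1}(c)}N_k'}\Big(\sum_{k\in I^{-1}(c)}N_k'-f(c)\sum_{a\in S(c)}O_a-(f(c)-1)\sum_{a\in B(c)}O_a\Big),$$ and $\boldsymbol l$, $M$ (symmetric) are the unique vector and matrix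 with $T(\boldsymbol O)=\boldsymbol l^t\boldsymbol O+\frac12\boldsymbol O^tM\boldsymbol O$ on $\mathbb R^{\mathcal N}$. *)

theory Defs
  imports Complex_Main
begin

definition Xsets :: "nat \<Rightarrow> nat set set" where
  "Xsets n = {A. A \<subseteq> {1..n} \<and> 2 \<le> card A}"

definition NN :: "nat \<Rightarrow> nat" where
  "NN n = 2 ^ n - n - 1"

definition admissible_index :: "nat \<Rightarrow> (nat set \<Rightarrow> nat) \<Rightarrow> bool" where
  "admissible_index n I \<longleftrightarrow> bij_betw I (Xsets n) {1..NN n} \<and>
     (\<forall>A\<in>Xsets n. \<forall>B\<in>Xsets n. A \<subset> B \<longrightarrow> I A < I B)"

definition Iinv :: "nat \<Rightarrow> (nat set \<Rightarrow> nat) \<Rightarrow> nat \<Rightarrow> nat set" where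
  "Iinv n I c = inv_into (Xsets n) I c"

definition Sset :: "nat \<Rightarrow> (nat set \<Rightarrow> nat) \<Rightarrow> nat \<Rightarrow> nat set" where
  "Sset n I c = {i \<in> {1..NN n}. Iinv n I c \<subseteq> Iinv n I i}"

definition Bset :: "nat \<Rightarrow> (nat set \<Rightarrow> nat) \<Rightarrow> nat \<Rightarrow> nat set" where
  "Bset n I c = {i \<in> {1..NN n}. Iinv n I i \<subset> Iinv n I c}"

text \<open>Objective T(O), with effective knowledges N'_k = min N_k F.\<close>
definition Tobj :: "nat \<Rightarrow> (nat set \<Rightarrow> nat) \<Rightarrow> (nat \<Rightarrow> real) \<Rightarrow> real \<Rightarrow> (nat \<Rightarrow> real) \<Rightarrow> real" where
  "Tobj n I Nk F Ov =
     (\<Sum>c\<in>{1..NN n}.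
        let A = Iinv n I c; f = real (card A); sS = (\<Sum>a\<in>Sset n I c. Ov a);
            sB = (\<Sum>a\<in>Bset n I c. Ov a)
        in sS / (\<Prod>k\<in>A. min (Nk k) F) *
           ((\<Sum>k\<in>A. min (Nk k) F) - f * sS - (f - 1) * sB))"

end

theory Submission
  imports Defs
begin

text \<open>Along the direction of the full set \<open>[n]\<close>, whose index \<open>\<N>\<close> is the largest one, every
  \<open>S(c)\<close> contains \<open>\<N>\<close> and no \<open>B(c)\<close> does. Hence in the homogeneous setting \<open>T(t e\<^sub>\<N>) = w (N t - t\<^sup>2)\<close>
  with \<open>w = \<Sum>\<^sub>c f(c) / N\<^bsup>f(c)\<^esup> \<ge> 0\<close>, so comparing with the quadratic expansion gives
  \<open>M\<^sub>\<N>\<^sub>\<N> = -2w\<close>. The claim then reads \<open>-w (N \<eta> + \<eta>\<^sup>2) \<le> -w N \<eta>\<close>.\<close>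

lemma linear_form_delta:
  fixes l :: "'a \<Rightarrow> 'b::comm_semiring_1"
  assumes "finite S" "K \<in> S"
  shows "(\<Sum>i\<in>S. l i * (if i = K then t else 0)) = l K * t"
  using assms by (simp add: if_distrib[of "\<lambda>z. _ * z"] cong: if_cong)

lemma bilinear_form_delta:
  fixes M :: "'a \<Rightarrow> 'a \<Rightarrow> 'b::comm_semiring_1"
  assumes "finite S" "K \<in> S"
  shows "(\<Sum>i\<in>S. \<Sum>j\<in>S. (if i = K then x else 0) * M i j * (if j = K then y else 0))
           = x * M K K * y"
  using assms
  by (simp add: if_distrib[of "\<lambda>z. z * _"] if_distrib[of "\<lambda>z. _ * z"] cong: if_cong)

lemma Iinv_in_Xsets:
  assumes "admissible_index n I" "c \<in> {1..NN n}"
  shows "Iinv n I c \<in> Xsets n"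
  using assms unfolding admissible_index_def Iinv_def
  by (metis bij_betw_def inv_into_into)

lemma full_set_in_Xsets: "2 \<le> n \<Longrightarrow> {1..n} \<in> Xsets n"
  unfolding Xsets_def by auto

lemma admissible_index_full_set:
  assumes "admissible_index n I" "2 \<le> n"
  shows "I {1..n} = NN n"
proof (rule ccontr)
  assume ne: "I {1..n} \<noteq> NN n"
  have bij: "bij_betw I (Xsets n) {1..NN n}"
    and mono: "\<forall>A\<in>Xsets n. \<forall>B\<in>Xsets n. A \<subset> B \<longrightarrow> I A < I B"
    using assms(1) unfolding admissible_index_def by auto
  have full: "{1..n} \<in> Xsets n" using full_set_in_Xsets[OF assms(2)] .
  then have "I {1..n} \<in> {1..NN n}" using bij by (auto simp: bij_betw_def)
  then have "NN n \<in> I ` Xsets n" using bij by (auto simp: bij_betw_def)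
  then obtain B where B: "B \<in> Xsets n" "I B = NN n" by (metis imageE)
  have "B \<subset> {1..n}" using B ne unfolding Xsets_def by auto
  then have "I B < I {1..n}" using mono B(1) full by blast
  then show False using B(2) \<open>I {1..n} \<in> {1..NN n}\<close> by auto
qed

lemma Iinv_NN:
  assumes "admissible_index n I" "2 \<le> n"
  shows "Iinv n I (NN n) = {1..n}"
  using full_set_in_Xsets[OF assms(2)] admissible_index_full_set[OF assms] assms(1)
  unfolding admissible_index_def Iinv_def by (metis bij_betw_def inv_into_f_f)

lemma NN_in_index_range:
  assumes "admissible_index n I" "2 \<le> n"
  shows "NN n \<in> {1..NN n}"
proof -
  have "I {1..n} \<in> {1..NN n}"
    using assms(1) full_set_in_Xsets[OF assms(2)] unfolding admissible_index_def
    by (blast intro: bij_betw_apply)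
  then show ?thesis using admissible_index_full_set[OF assms] by simp
qed

lemma NN_in_Sset:
  assumes "admissible_index n I" "2 \<le> n" "c \<in> {1..NN n}"
  shows "NN n \<in> Sset n I c"
  using Iinv_in_Xsets[OF assms(1,3)] Iinv_NN[OF assms(1,2)] assms(3)
  unfolding Sset_def Xsets_def by auto

lemma NN_notin_Bset:
  assumes "admissible_index n I" "2 \<le> n" "c \<in> {1..NN n}"
  shows "NN n \<notin> Bset n I c"
  using Iinv_in_Xsets[OF assms(1,3)] Iinv_NN[OF assms(1,2)]
  unfolding Bset_def Xsets_def by auto

lemma min_knowledge_homogeneous:
  fixes Nk :: "nat \<Rightarrow> real"
  assumes "1 \<le> n" "N > 0" "\<forall>k\<in>{1..n}. Nk k = N" "F \<ge> real n * N"
  shows "\<forall>k\<in>{1..n}. min (Nk k) F = N"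
proof -
  have "N \<le> real n * N" using assms(1,2) by simp
  then show ?thesis using assms(3,4) by auto
qed

definition full_set_weight :: "nat \<Rightarrow> (nat set \<Rightarrow> nat) \<Rightarrow> real \<Rightarrow> real" where
  "full_set_weight n I N = (\<Sum>c\<in>{1..NN n}. real (card (Iinv n I c)) / N ^ card (Iinv n I c))"

lemma full_set_weight_nonneg: "N \<ge> 0 \<Longrightarrow> full_set_weight n I N \<ge> 0"
  unfolding full_set_weight_def by (intro sum_nonneg) auto

lemma Tobj_full_set_direction:
  assumes "admissible_index n I" "2 \<le> n" "\<forall>k\<in>{1..n}. min (Nk k) F = N"
  shows "Tobj n I Nk F (\<lambda>i. if i = NN n then t else 0)
           = full_set_weight n I N * (N * t - t\<^sup>2)"
proof -
  have summand: "(let A = Iinv n I c; f = real (card A);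
                   sS = (\<Sum>a\<in>Sset n I c. if a = NN n then t else 0);
                   sB = (\<Sum>a\<in>Bset n I c. if a = NN n then t else 0)
               in sS / (\<Prod>k\<in>A. min (Nk k) F) * ((\<Sum>k\<in>A. min (Nk k) F) - f * sS - (f - 1) * sB))
             = real (card (Iinv n I c)) / N ^ card (Iinv n I c) * (N * t - t\<^sup>2)"
    if c: "c \<in> {1..NN n}" for c
  proof -
    have fin: "finite (Sset n I c)" "finite (Bset n I c)"
      unfolding Sset_def Bset_def by auto
    have "Iinv n I c \<subseteq> {1..n}" using Iinv_in_Xsets[OF assms(1) c] unfolding Xsets_def by auto
    then have "(\<Prod>k\<in>Iinv n I c. min (Nk k) F) = N ^ card (Iinv n I c)"
      and "(\<Sum>k\<in>Iinv n I c. min (Nk k) F) = real (card (Iinv n I c)) * N"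
      using assms(3) by (auto simp: subset_iff cong: prod.cong sum.cong)
    then show ?thesis
      using NN_in_Sset[OF assms(1,2) c] NN_notin_Bset[OF assms(1,2) c] fin
      by (simp add: Let_def power2_eq_square algebra_simps diff_divide_distrib[symmetric])
  qed
  show ?thesis
    unfolding Tobj_def full_set_weight_def sum_distrib_right
    using summand by (intro sum.cong) auto
qed

theorem mainTheorem4:
  fixes n :: nat and I :: "nat set \<Rightarrow> nat" and Nk :: "nat \<Rightarrow> real"
    and N F \<eta> :: real and l :: "nat \<Rightarrow> real" and M :: "nat \<Rightarrow> nat \<Rightarrow> real"
  assumes "n \<ge> 2"
    and "admissible_index n I"
    and "N > 0" and "\<forall>k\<in>{1..n}. Nk k = N" and "F \<ge> real n * N"
    and "\<eta> > 0"
    and "\<forall>i\<in>{1..NN n}. \<forall>j\<in>{1..NN n}. M i j = M j i"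
    and "\<forall>Ov. Tobj n I Nk F Ov =
           (\<Sum>i\<in>{1..NN n}. l i * Ov i)
           + 1/2 * (\<Sum>i\<in>{1..NN n}. \<Sum>j\<in>{1..NN n}. Ov i * M i j * Ov j)"
  shows "let Ostar = (\<lambda>i. if i = NN n then N / 2 else 0);
             \<epsilon> = (\<lambda>i. if i = NN n then - \<eta> else 0)
         in Tobj n I Nk F \<epsilon> \<le>
            - (\<Sum>i\<in>{1..NN n}. \<Sum>j\<in>{1..NN n}. Ostar i * M i j * \<epsilon> j)"
proof -
  define K where "K = NN n"
  define w where "w = full_set_weight n I N"
  have K: "K \<in> {1..K}" using NN_in_index_range[OF assms(2,1)] unfolding K_def .
  have "\<forall>k\<in>{1..n}. min (Nk k) F = N"
    using assms(1) by (intro min_knowledge_homogeneous[OF _ assms(3,4,5)]) simp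
  then have T: "Tobj n I Nk F (\<lambda>i. if i = K then t else 0) = w * (N * t - t\<^sup>2)" for t
    using Tobj_full_set_direction assms(1,2) unfolding K_def w_def by blast
  have Q: "Tobj n I Nk F (\<lambda>i. if i = K then t else 0) = l K * t + 1/2 * (t * M K K * t)" for t
    using assms(8)[rule_format, of "\<lambda>i. if i = K then t else 0", folded K_def,
        unfolded bilinear_form_delta[OF finite_atLeastAtMost K]]
    unfolding linear_form_delta[OF finite_atLeastAtMost K] .
  \<comment> \<open>Only the diagonal entry \<open>M K K\<close> enters, so the symmetry of \<open>M\<close> is not needed.\<close>
  have MKK: "M K K = - 2 * w"
    using T[of 1] Q[of 1] T[of "-1"] Q[of "-1"] by (simp add: algebra_simps)
  have "0 \<le> w * \<eta>\<^sup>2" using full_set_weight_nonneg assms(3) unfolding w_def by simp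
  then have "Tobj n I Nk F (\<lambda>i. if i = K then - \<eta> else 0) \<le> - (N / 2 * M K K * - \<eta>)"
    unfolding T MKK by (simp add: algebra_simps)
  then show ?thesis
    unfolding Let_def K_def[symmetric] bilinear_form_delta[OF finite_atLeastAtMost K] by simp
qed

end
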